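(* Assume the transversality condition holds at $(t^*,\bm x^* )\in I\times S$, and that PWS solutions $\bm x(t;\bm y,s)$ are Lipschitz continuous in the initial data $(\bm y,s)$. Then there exists $\epsilon>0$ such that for all $\bm y\in K^\epsilon_+:=\bar B_\epsilon(\bm x^* )\cap S$ and $(t,s)\in J^\epsilon_+:=\{(t,s)\in[t^*,t^*+\epsilon]^2: t>s\}$, the trajectory $\bm x(t;\bm y,s)$ has no transition in the time interval $(s,t^*+\epsilon]$. Furthermore, let $$M^\epsilon_+=\tfrac12\sup_{(t,s)\in J^\epsilon_+,\ \bm y\in K^\epsilon_+}\big|\dot{\bm x}(t)\cdot H_g(\bm x(t))\dot{\bm x}(t)+\nabla g(\bm x(t))\cdot\ddot{\bm x}(t)\big|,$$ where $\bm x(t)=\bm x(t;\bm y,s)$. If $0<t-s<\min\big(t^*+\epsilon-s,\ \alpha_S^2/M^\epsilon_+\big)$, then $g(\bm x(t;\bm y,s))>0$.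
   Context: Setting: $I$ bounded open interval, $U\subset\mathbb R^d$ bounded open, switching function $g\in C^2$ with $\nabla g\ne0$, $S=\{g=0\}$, $U_\pm=\{\pm g>0\}$; PWS system $\dot{\bm x}=\bm f_\pm(t,\bm x)$ on $U_\pm$, $\bm f_\pm\in C^1(I\times(U_\pm\cup S)\to\mathbb R^d)$. Transversality: nonzero $\alpha_S$ with $\nabla g(\bm x^* )\cdot\bm f_\pm(t^*,\bm x^* )\ge\alpha_S^2$ on $I\times S$. Solutions satisfy (H1) finitely many transition times (times at which $\bm x(t)\in S$); (H2) one-sided limits of $\dot{\bm x}$ at a transition equal $\bm f_\pm$ on the side in $U_\pm$; (H3) $\bm x$ is $C^2$ with bounded $\ddot{\bm x}$ away from transitions. $\bm x(t;\bm y,s)$ denotes the PWS solution with $\bm x(s)=\bm y$ (for $\bm y\in S$ and $t>s$ it evolves by $\bm f_+$). $H_g$ is the Hessian of $g$; $\bar B_\epsilon$ is a closed ball. *)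

theory Defs
  imports "HOL-Analysis.Analysis"
begin

definition Uplus :: "'a set \<Rightarrow> ('a \<Rightarrow> real) \<Rightarrow> 'a set" where
  "Uplus U g = {x \<in> U. g x > 0}"
definition Uminus :: "'a set \<Rightarrow> ('a \<Rightarrow> real) \<Rightarrow> 'a set" where
  "Uminus U g = {x \<in> U. g x < 0}"
definition Sset :: "'a set \<Rightarrow> ('a \<Rightarrow> real) \<Rightarrow> 'a set" where
  "Sset U g = {x \<in> U. g x = 0}"

definition C1_on :: "('a::real_normed_vector \<Rightarrow> 'b::real_normed_vector) \<Rightarrow> 'a set \<Rightarrow> bool" where
  "C1_on F D \<longleftrightarrow> (\<exists>F'. (\<forall>z\<in>D. (F has_derivative F' z) (at z within D))
                        \<and> (\<forall>h. continuous_on D (\<lambda>z. F' z h)))"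

definition vd :: "(real \<Rightarrow> 'a::real_normed_vector) \<Rightarrow> real \<Rightarrow> 'a" where
  "vd x t = vector_derivative x (at t)"
definition vdd :: "(real \<Rightarrow> 'a::real_normed_vector) \<Rightarrow> real \<Rightarrow> 'a" where
  "vdd x t = vector_derivative (vd x) (at t)"

definition pws_solution ::
  "real set \<Rightarrow> 'a::euclidean_space set \<Rightarrow> ('a \<Rightarrow> real) \<Rightarrow> (real \<Rightarrow> 'a \<Rightarrow> 'a)
    \<Rightarrow> (real \<Rightarrow> 'a \<Rightarrow> 'a) \<Rightarrow> (real \<Rightarrow> 'a) \<Rightarrow> bool" where
  "pws_solution J U g fp fm x \<longleftrightarrow>
     is_interval J \<and> (\<forall>t\<in>J. x t \<in> U) \<and> continuous_on J x
     \<comment> \<open>ODE away from transitions\<close>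
     \<and> (\<forall>t\<in>J. g (x t) > 0 \<longrightarrow> (x has_vector_derivative fp t (x t)) (at t within J))
     \<and> (\<forall>t\<in>J. g (x t) < 0 \<longrightarrow> (x has_vector_derivative fm t (x t)) (at t within J))
     \<comment> \<open>(H1) finitely many transition times\<close>
     \<and> finite {t \<in> J. g (x t) = 0}
     \<comment> \<open>(H2) one-sided limits of the derivative at transitions\<close>
     \<and> (\<forall>t\<in>J. g (x t) = 0 \<longrightarrow>
          ((\<forall>\<^sub>F \<tau> in at t within (J \<inter> {t<..}). g (x \<tau>) > 0)
              \<longrightarrow> (vd x \<longlongrightarrow> fp t (x t)) (at t within (J \<inter> {t<..})))
        \<and> ((\<forall>\<^sub>F \<tau> in at t within (J \<inter> {t<..}). g (x \<tau>) < 0)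
              \<longrightarrow> (vd x \<longlongrightarrow> fm t (x t)) (at t within (J \<inter> {t<..})))
        \<and> ((\<forall>\<^sub>F \<tau> in at t within (J \<inter> {..<t}). g (x \<tau>) > 0)
              \<longrightarrow> (vd x \<longlongrightarrow> fp t (x t)) (at t within (J \<inter> {..<t})))
        \<and> ((\<forall>\<^sub>F \<tau> in at t within (J \<inter> {..<t}). g (x \<tau>) < 0)
              \<longrightarrow> (vd x \<longlongrightarrow> fm t (x t)) (at t within (J \<inter> {..<t}))))
     \<comment> \<open>(H3) C^2 with bounded second derivative away from transitions\<close>
     \<and> (let J0 = {t \<in> interior J. g (x t) \<noteq> 0} in
          (\<forall>t\<in>J0. (vd x has_vector_derivative vdd x t) (at t))
          \<and> continuous_on J0 (vdd x)
          \<and> bounded (vdd x ` J0))"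

text \<open>The quantity M^eps_+ (as an extended real; it may be infinite).\<close>
definition Mplus ::
  "'a::euclidean_space set \<Rightarrow> ('a \<Rightarrow> real) \<Rightarrow> ('a \<Rightarrow> 'a) \<Rightarrow> ('a \<Rightarrow> 'a \<Rightarrow> 'a)
     \<Rightarrow> (real \<Rightarrow> 'a \<Rightarrow> real \<Rightarrow> 'a) \<Rightarrow> real \<Rightarrow> 'a \<Rightarrow> real \<Rightarrow> ereal" where
  "Mplus U g Dg Hg X tst xst \<epsilon> =
     ereal (1/2) *
     (SUP z \<in> {(t, s, y). t \<in> {tst..tst+\<epsilon>} \<and> s \<in> {tst..tst+\<epsilon>} \<and> t > s
                          \<and> y \<in> cball xst \<epsilon> \<inter> Sset U g}.
        (case z of (t, s, y) \<Rightarrow>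
          ereal \<bar>vd (\<lambda>\<tau>. X \<tau> y s) t \<bullet> Hg (X t y s) (vd (\<lambda>\<tau>. X \<tau> y s) t)
                + Dg (X t y s) \<bullet> vdd (\<lambda>\<tau>. X \<tau> y s) t\<bar>))"

end

theory Submission imports Defs begin

text \<open>
  Near (t*, x*) the derivative of g along the + field, grad g(x) \<bullet> f_+(t, x), stays positive by
  continuity, and Lipschitz dependence on the initial data keeps every trajectory started on
  S near t* close to x* for a short time. Such a trajectory enters U_+ immediately, and as long
  as it stays in U_+ the function g increases along it. So g cannot return to 0: at a first
  return time monotonicity would give g(x(\<tau>)) > g(x(s)) = 0, and finitely many transition
  times guarantee that a first one exists. Hence g > 0 on the whole time window, which
  yields both claims without using the curvature bound M_+.
\<close>

lemma has_real_derivative_compose_gradient: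
  assumes "(x has_vector_derivative v) (at t)"
    and "(g has_derivative (\<lambda>h. G \<bullet> h)) (at (x t))"
  shows "((\<lambda>\<tau>. g (x \<tau>)) has_real_derivative G \<bullet> v) (at t)"
proof -
  have "((\<lambda>\<tau>. g (x \<tau>)) has_derivative (\<lambda>r. G \<bullet> (r *\<^sub>R v))) (at t)"
    using has_derivative_compose[OF assms(1)[unfolded has_vector_derivative_def] assms(2)]
    by simp
  moreover have "(\<lambda>r. G \<bullet> (r *\<^sub>R v)) = (*) (G \<bullet> v)"
    by (auto simp: mult.commute)
  ultimately show ?thesis
    unfolding has_field_derivative_def by simp
qed

lemma inner_pos_near_point:
  fixes f :: "real \<Rightarrow> 'a::real_inner \<Rightarrow> 'a"
  assumes f: "C1_on (\<lambda>(t, x). f t x) D"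
    and z0: "(t0, x0) \<in> D"
    and G: "isCont G x0"
    and pos: "G x0 \<bullet> f t0 x0 > 0"
  shows "\<exists>\<delta>>0. \<forall>t x. (t, x) \<in> D \<longrightarrow> dist t t0 < \<delta> \<longrightarrow> dist x x0 < \<delta> \<longrightarrow> G x \<bullet> f t x > 0"
proof -
  define F where "F = (\<lambda>z::real \<times> 'a. G (snd z) \<bullet> f (fst z) (snd z))"
  from f obtain f' where "((\<lambda>(t, x). f t x) has_derivative f' (t0, x0)) (at (t0, x0) within D)"
    unfolding C1_on_def using z0 by blast
  then have "continuous (at (t0, x0) within D) (\<lambda>(t, x). f t x)"
    by (rule has_derivative_continuous)
  moreover have "continuous (at (t0, x0) within D) (\<lambda>z. G (snd z))"
    using isCont_o2[where f=snd and a="(t0, x0)" and g=G] G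
    by (simp add: continuous_snd continuous_ident continuous_at_imp_continuous_within)
  ultimately have "continuous (at (t0, x0) within D) (\<lambda>z. G (snd z) \<bullet> (\<lambda>(t, x). f t x) z)"
    by (rule continuous_inner[rotated])
  then have "continuous (at (t0, x0) within D) F"
    unfolding F_def by (simp add: case_prod_beta)
  then obtain \<delta> where \<delta>: "\<delta> > 0"
    and near: "\<And>z. z \<in> D \<Longrightarrow> dist z (t0, x0) < \<delta> \<Longrightarrow> dist (F z) (F (t0, x0)) < F (t0, x0)"
    using pos unfolding continuous_within_eps_delta F_def by fastforce
  show ?thesis
  proof (intro exI[of _ "\<delta> / 2"] conjI allI impI)
    fix t x assume "(t, x) \<in> D" "dist t t0 < \<delta> / 2" "dist x x0 < \<delta> / 2"
    then have "dist (F (t, x)) (F (t0, x0)) < F (t0, x0)"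
      using norm_Pair_le[of "t - t0" "x - x0"] by (intro near) (auto simp: dist_norm)
    then show "G x \<bullet> f t x > 0"
      by (auto simp: F_def dist_real_def)
  qed (use \<delta> in simp)
qed

lemma pos_on_interval_if_nonvanishing:
  fixes h :: "real \<Rightarrow> real"
  assumes cont: "continuous_on {s<..<c} h" and nz: "\<forall>\<tau>\<in>{s<..<c}. h \<tau> \<noteq> 0"
    and leave: "\<forall>\<^sub>F \<tau> in at_right s. h \<tau> > 0" and \<tau>: "\<tau> \<in> {s<..<c}"
  shows "h \<tau> > 0"
proof (rule ccontr)
  assume "\<not> h \<tau> > 0"
  from leave obtain r where r: "r > s" "\<And>\<sigma>. s < \<sigma> \<Longrightarrow> \<sigma> < r \<Longrightarrow> h \<sigma> > 0"
    unfolding eventually_at_right_field by blast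
  define \<sigma> where "\<sigma> = (s + min r \<tau>) / 2"
  have \<sigma>: "s < \<sigma>" "\<sigma> < r" "\<sigma> < \<tau>"
    using r \<tau> by (auto simp: \<sigma>_def)
  have "continuous_on {\<sigma>..\<tau>} h"
    by (rule continuous_on_subset[OF cont]) (use \<sigma> \<tau> in auto)
  then obtain \<rho> where "\<sigma> \<le> \<rho>" "\<rho> \<le> \<tau>" "h \<rho> = 0"
    using IVT2'[of h \<tau> 0 \<sigma>] \<sigma> r \<open>\<not> h \<tau> > 0\<close> by force
  then show False
    using nz \<sigma> \<tau> by auto
qed

lemma pos_at_end_if_increasing_while_pos:
  fixes h :: "real \<Rightarrow> real"
  assumes "s < c" and cont: "continuous_on {s..c} h" and start: "0 \<le> h s"
    and leave: "\<forall>\<^sub>F \<tau> in at_right s. h \<tau> > 0"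
    and nz: "\<forall>\<tau>\<in>{s<..<c}. h \<tau> \<noteq> 0"
    and incr: "\<forall>\<tau>\<in>{s<..<c}. h \<tau> > 0 \<longrightarrow> (\<exists>d>0. (h has_real_derivative d) (at \<tau>))"
  shows "h c > 0"
proof -
  have "continuous_on {s<..<c} h"
    using cont by (rule continuous_on_subset) auto
  then have "h \<tau> > 0" if "\<tau> \<in> {s<..<c}" for \<tau>
    using pos_on_interval_if_nonvanishing[OF _ nz leave that] by blast
  then have "h s < h c"
    using incr by (intro DERIV_pos_imp_increasing_open[OF \<open>s < c\<close> _ cont]) fastforce
  with start show ?thesis by simp
qed

lemma pos_after_start_if_increasing_while_pos:
  fixes h :: "real \<Rightarrow> real"
  assumes cont: "continuous_on {s..e} h" and start: "0 \<le> h s"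
    and leave: "\<forall>\<^sub>F \<tau> in at_right s. h \<tau> > 0"
    and fin: "finite {\<tau>\<in>{s<..e}. h \<tau> = 0}"
    and incr: "\<forall>\<tau>\<in>{s<..<e}. h \<tau> > 0 \<longrightarrow> (\<exists>d>0. (h has_real_derivative d) (at \<tau>))"
  shows "\<forall>\<tau>\<in>{s<..e}. h \<tau> > 0"
proof -
  have end_pos: "h c > 0" if c: "c \<in> {s<..e}" and nz: "\<forall>\<tau>\<in>{s<..<c}. h \<tau> \<noteq> 0" for c
  proof (rule pos_at_end_if_increasing_while_pos[OF _ _ start leave nz])
    show "s < c"
      using c by simp
    show "continuous_on {s..c} h"
      using cont by (rule continuous_on_subset) (use c in auto)
    show "\<forall>\<tau>\<in>{s<..<c}. h \<tau> > 0 \<longrightarrow> (\<exists>d>0. (h has_real_derivative d) (at \<tau>))"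
      using incr c by auto
  qed
  define Z where "Z = {\<tau>\<in>{s<..e}. h \<tau> = 0}"
  have "finite Z"
    using fin by (simp add: Z_def)
  have "Z = {}"
  proof (rule ccontr)
    assume "Z \<noteq> {}"
    with \<open>finite Z\<close> have "Min Z \<in> Z"
      by (rule Min_in)
    then have Min: "Min Z \<in> {s<..e}" "h (Min Z) = 0"
      by (simp_all add: Z_def)
    have "\<forall>\<tau>\<in>{s<..<Min Z}. h \<tau> \<noteq> 0"
    proof (intro ballI notI)
      fix \<tau> assume \<tau>: "\<tau> \<in> {s<..<Min Z}" and "h \<tau> = 0"
      with Min have "\<tau> \<in> Z"
        by (simp add: Z_def)
      with \<open>finite Z\<close> have "Min Z \<le> \<tau>"
        by (rule Min_le)
      with \<tau> show False
        by simp
    qed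
    with end_pos[OF Min(1)] Min(2) show False
      by simp
  qed
  show ?thesis
  proof
    fix \<tau> assume \<tau>: "\<tau> \<in> {s<..e}"
    moreover have "\<forall>\<sigma>\<in>{s<..<\<tau>}. h \<sigma> \<noteq> 0"
      using \<tau> \<open>Z = {}\<close> by (auto simp: Z_def)
    ultimately show "h \<tau> > 0"
      by (rule end_pos)
  qed
qed

lemma pws_solutionD:
  assumes "pws_solution J U g fp fm x"
  shows pws_solution_in_domain: "\<And>t. t \<in> J \<Longrightarrow> x t \<in> U"
    and pws_solution_continuous_on: "continuous_on J x"
    and pws_solution_plus_derivative:
      "\<And>t. t \<in> J \<Longrightarrow> g (x t) > 0 \<Longrightarrow> (x has_vector_derivative fp t (x t)) (at t within J)"
    and pws_solution_finite_transitions: "finite {t \<in> J. g (x t) = 0}"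
  using assms unfolding pws_solution_def by (simp_all add: Let_def)

lemma pws_solution_stays_positive:
  assumes sol: "pws_solution J U g fp fm x" and sub: "{s..e} \<subseteq> J"
    and g_grad: "\<And>z. z \<in> U \<Longrightarrow> (g has_derivative (\<lambda>h. Dg z \<bullet> h)) (at z)"
    and start: "g (x s) = 0" and leave: "\<forall>\<^sub>F \<tau> in at_right s. g (x \<tau>) > 0"
    and transversal: "\<forall>\<tau>\<in>{s<..<e}. g (x \<tau>) > 0 \<longrightarrow> Dg (x \<tau>) \<bullet> fp \<tau> (x \<tau>) > 0"
  shows "\<forall>\<tau>\<in>{s<..e}. g (x \<tau>) > 0"
proof (rule pos_after_start_if_increasing_while_pos)
  have "continuous_on U g"
    using g_grad has_derivative_continuous by (meson continuous_at_imp_continuous_on)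
  then have "continuous_on J (\<lambda>t. g (x t))"
    using continuous_on_compose2[OF _ pws_solution_continuous_on[OF sol]] pws_solution_in_domain[OF sol]
    by blast
  then show "continuous_on {s..e} (\<lambda>t. g (x t))"
    using sub by (rule continuous_on_subset)
  show "finite {\<tau>\<in>{s<..e}. g (x \<tau>) = 0}"
    using sub by (intro finite_subset[OF _ pws_solution_finite_transitions[OF sol]]) auto
  show "\<forall>\<tau>\<in>{s<..<e}. g (x \<tau>) > 0 \<longrightarrow> (\<exists>d>0. ((\<lambda>t. g (x t)) has_real_derivative d) (at \<tau>))"
  proof (intro ballI impI)
    fix \<tau> assume \<tau>: "\<tau> \<in> {s<..<e}" and pos: "g (x \<tau>) > 0"
    have "\<tau> \<in> J"
      using \<tau> sub by auto
    moreover have "at \<tau> within J = at \<tau>"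
      using \<tau> sub by (intro at_within_open_subset[of _ "{s<..<e}"]) auto
    ultimately have "(x has_vector_derivative fp \<tau> (x \<tau>)) (at \<tau>)"
      using pws_solution_plus_derivative[OF sol _ pos] by simp
    then have "((\<lambda>t. g (x t)) has_real_derivative Dg (x \<tau>) \<bullet> fp \<tau> (x \<tau>)) (at \<tau>)"
      using g_grad pws_solution_in_domain[OF sol \<open>\<tau> \<in> J\<close>]
      by (intro has_real_derivative_compose_gradient) auto
    then show "\<exists>d>0. ((\<lambda>t. g (x t)) has_real_derivative d) (at \<tau>)"
      using transversal \<tau> pos by blast
  qed
qed (use start leave in auto)

lemma pws_solution_positive_near_transversal_point:
  assumes sol: "pws_solution J U g fp fm x" and sub: "{s..e} \<subseteq> J"
    and g_grad: "\<And>z. z \<in> U \<Longrightarrow> (g has_derivative (\<lambda>h. Dg z \<bullet> h)) (at z)"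
    and start: "g (x s) = 0" and leave: "\<forall>\<^sub>F \<tau> in at_right s. g (x \<tau>) > 0"
    and near: "\<And>t z. t \<in> J \<Longrightarrow> z \<in> Uplus U g \<Longrightarrow> dist t t0 < \<delta> \<Longrightarrow> dist z z0 < \<delta> \<Longrightarrow>
                Dg z \<bullet> fp t z > 0"
    and close: "\<And>\<tau>. \<tau> \<in> {s..e} \<Longrightarrow> dist (x \<tau>) (x s) \<le> L * (\<tau> - s)"
    and L: "0 \<le> L" and t0: "t0 \<le> s" and z0: "dist (x s) z0 \<le> e - t0"
    and \<delta>: "(L + 1) * (e - t0) < \<delta>"
  shows "\<forall>\<tau>\<in>{s<..e}. g (x \<tau>) > 0"
  using sol sub g_grad start leave
proof (rule pws_solution_stays_positive)
  show "\<forall>\<tau>\<in>{s<..<e}. g (x \<tau>) > 0 \<longrightarrow> Dg (x \<tau>) \<bullet> fp \<tau> (x \<tau>) > 0"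
  proof (intro ballI impI near)
    fix \<tau> assume \<tau>: "\<tau> \<in> {s<..<e}" and pos: "g (x \<tau>) > 0"
    show "\<tau> \<in> J"
      using \<tau> sub by auto
    then show "x \<tau> \<in> Uplus U g"
      using pws_solution_in_domain[OF sol] pos by (simp add: Uplus_def)
    have "0 \<le> L * (e - t0)"
      using L \<tau> t0 by simp
    then have "e - t0 < \<delta>"
      using \<delta> by (simp add: algebra_simps)
    then show "dist \<tau> t0 < \<delta>"
      using \<tau> t0 by (simp add: dist_real_def)
    have "dist (x \<tau>) z0 \<le> dist (x \<tau>) (x s) + dist (x s) z0"
      by (rule dist_triangle)
    also have "\<dots> \<le> L * (e - t0) + (e - t0)"
      using close[of \<tau>] \<tau> t0 z0 mult_left_mono[OF _ L, of "\<tau> - s" "e - t0"] by simp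
    finally show "dist (x \<tau>) z0 < \<delta>"
      using \<delta> by (simp add: algebra_simps)
  qed
qed

lemma lipschitz_initial_data_imp_dist_le:
  fixes X :: "real \<Rightarrow> 'a::real_normed_vector \<Rightarrow> real \<Rightarrow> 'b::real_normed_vector"
  assumes "\<exists>L. \<forall>s\<in>T. \<forall>s'\<in>T. \<forall>y\<in>U. \<forall>y'\<in>U. \<forall>t\<in>T.
             s \<le> t \<longrightarrow> s' \<le> t \<longrightarrow> norm (X t y s - X t y' s') \<le> L * (norm (y - y') + \<bar>s - s'\<bar>)"
  shows "\<exists>L\<ge>0. \<forall>s\<in>T. \<forall>\<tau>\<in>T. \<forall>y\<in>U. s \<le> \<tau> \<longrightarrow> dist (X \<tau> y s) (X \<tau> y \<tau>) \<le> L * (\<tau> - s)"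
proof -
  obtain L where L: "\<forall>s\<in>T. \<forall>s'\<in>T. \<forall>y\<in>U. \<forall>y'\<in>U. \<forall>t\<in>T.
      s \<le> t \<longrightarrow> s' \<le> t \<longrightarrow> norm (X t y s - X t y' s') \<le> L * (norm (y - y') + \<bar>s - s'\<bar>)"
    using assms by blast
  have "dist (X \<tau> y s) (X \<tau> y \<tau>) \<le> max L 0 * (\<tau> - s)"
    if "s \<in> T" "\<tau> \<in> T" "y \<in> U" "s \<le> \<tau>" for s \<tau> y
  proof -
    have "\<bar>s - \<tau>\<bar> = \<tau> - s"
      using that by simp
    then have "dist (X \<tau> y s) (X \<tau> y \<tau>) \<le> L * (\<tau> - s)"
      using L[rule_format, of s \<tau> y y \<tau>] that by (simp add: dist_norm)
    also have "\<dots> \<le> max L 0 * (\<tau> - s)"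
      using that by (intro mult_right_mono) auto
    finally show ?thesis .
  qed
  then show ?thesis
    by (intro exI[of _ "max L 0"]) auto
qed

lemma pws_flow_positive_near_transversal_point:
  assumes sol: "\<And>s y. s \<in> {a<..<b} \<Longrightarrow> y \<in> U \<Longrightarrow>
                pws_solution {t \<in> {a<..<b}. s \<le> t} U g fp fm (\<lambda>t. X t y s)
                \<and> X s y s = y
                \<and> (g y = 0 \<longrightarrow> (\<forall>\<^sub>F t in at_right s. g (X t y s) > 0))"
    and g_grad: "\<And>z. z \<in> U \<Longrightarrow> (g has_derivative (\<lambda>h. Dg z \<bullet> h)) (at z)"
    and close: "\<forall>s\<in>{a<..<b}. \<forall>\<tau>\<in>{a<..<b}. \<forall>y\<in>U. s \<le> \<tau> \<longrightarrow> dist (X \<tau> y s) (X \<tau> y \<tau>) \<le> L * (\<tau> - s)"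
    and near: "\<forall>t z. (t, z) \<in> {a<..<b} \<times> (Uplus U g \<union> Sset U g)
                \<longrightarrow> dist t t0 < \<delta> \<longrightarrow> dist z z0 < \<delta> \<longrightarrow> Dg z \<bullet> fp t z > 0"
    and L: "0 \<le> L" and \<epsilon>: "a < t0" "t0 + \<epsilon> < b" "(L + 1) * \<epsilon> < \<delta>"
    and y: "y \<in> cball z0 \<epsilon> \<inter> Sset U g" and s: "s \<in> {t0..t0+\<epsilon>}"
  shows "\<forall>\<tau>\<in>{s<..t0+\<epsilon>}. g (X \<tau> y s) > 0"
proof -
  have sab: "s \<in> {a<..<b}" and yU: "y \<in> U" and gy: "g y = 0"
    using s y \<epsilon> by (auto simp: Sset_def)
  note sol_y = sol[OF sab yU]
  show ?thesis
  proof (rule pws_solution_positive_near_transversal_point[OF _ _ g_grad])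
    show "pws_solution {t \<in> {a<..<b}. s \<le> t} U g fp fm (\<lambda>t. X t y s)"
      using sol_y by blast
    show "{s..t0 + \<epsilon>} \<subseteq> {t \<in> {a<..<b}. s \<le> t}"
      using sab \<epsilon> by auto
    show "g (X s y s) = 0" "\<forall>\<^sub>F t in at_right s. g (X t y s) > 0"
      using sol_y gy by simp_all
    show "Dg z \<bullet> fp t z > 0" if "t \<in> {t \<in> {a<..<b}. s \<le> t}" "z \<in> Uplus U g"
      "dist t t0 < \<delta>" "dist z z0 < \<delta>" for t z
      using near that by blast
    show "dist (X \<tau> y s) (X s y s) \<le> L * (\<tau> - s)" if "\<tau> \<in> {s..t0 + \<epsilon>}" for \<tau>
    proof -
      have "\<tau> \<in> {a<..<b}" "s \<le> \<tau>"
        using that sab \<epsilon> by auto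
      then have "dist (X \<tau> y s) (X \<tau> y \<tau>) \<le> L * (\<tau> - s)"
        using close sab yU by blast
      moreover have "X \<tau> y \<tau> = y" "X s y s = y"
        using sol[OF \<open>\<tau> \<in> {a<..<b}\<close> yU] sol_y by blast+
      ultimately show ?thesis
        by simp
    qed
    show "dist (X s y s) z0 \<le> t0 + \<epsilon> - t0"
      using sol_y y by (simp add: dist_commute)
  qed (use s L \<epsilon> in auto)
qed

theorem lemmaB1:
  fixes a b :: real and U :: "'a::euclidean_space set"
    and g :: "'a \<Rightarrow> real" and Dg :: "'a \<Rightarrow> 'a" and Hg :: "'a \<Rightarrow> 'a \<Rightarrow> 'a"
    and fp fm :: "real \<Rightarrow> 'a \<Rightarrow> 'a"
    and X :: "real \<Rightarrow> 'a \<Rightarrow> real \<Rightarrow> 'a"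
    and \<alpha> tst :: real and xst :: 'a
  assumes I: "a < b"
    and U: "open U" "bounded U"
    and g_grad: "\<And>x. x \<in> U \<Longrightarrow> (g has_derivative (\<lambda>h. Dg x \<bullet> h)) (at x)"
    and g_hess: "\<And>x. x \<in> U \<Longrightarrow> (Dg has_derivative Hg x) (at x)"
    and g_C2: "\<And>h. continuous_on U (\<lambda>x. Hg x h)"
    and g_nondeg: "\<And>x. x \<in> U \<Longrightarrow> Dg x \<noteq> 0"
    and fp_C1: "C1_on (\<lambda>(t, x). fp t x) ({a<..<b} \<times> (Uplus U g \<union> Sset U g))"
    and fm_C1: "C1_on (\<lambda>(t, x). fm t x) ({a<..<b} \<times> (Uminus U g \<union> Sset U g))"
    and alpha: "\<alpha> \<noteq> 0"
    and transv: "\<And>t x. t \<in> {a<..<b} \<Longrightarrow> x \<in> Sset U g \<Longrightarrow>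
                   Dg x \<bullet> fp t x \<ge> \<alpha>\<^sup>2 \<and> Dg x \<bullet> fm t x \<ge> \<alpha>\<^sup>2"
    and pt: "tst \<in> {a<..<b}" "xst \<in> Sset U g"
    and sol: "\<And>s y. s \<in> {a<..<b} \<Longrightarrow> y \<in> U \<Longrightarrow>
                pws_solution {t \<in> {a<..<b}. s \<le> t} U g fp fm (\<lambda>t. X t y s)
                \<and> X s y s = y
                \<and> (g y = 0 \<longrightarrow> (\<forall>\<^sub>F t in at_right s. g (X t y s) > 0))"
    and lip: "\<exists>L. \<forall>s\<in>{a<..<b}. \<forall>s'\<in>{a<..<b}. \<forall>y\<in>U. \<forall>y'\<in>U. \<forall>t\<in>{a<..<b}.
                s \<le> t \<longrightarrow> s' \<le> t \<longrightarrow>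
                norm (X t y s - X t y' s') \<le> L * (norm (y - y') + \<bar>s - s'\<bar>)"
  shows "\<exists>\<epsilon>>0. {tst..tst+\<epsilon>} \<subseteq> {a<..<b}
           \<and> (\<forall>y \<in> cball xst \<epsilon> \<inter> Sset U g. \<forall>t s.
                 t \<in> {tst..tst+\<epsilon>} \<and> s \<in> {tst..tst+\<epsilon>} \<and> t > s \<longrightarrow>
                 (\<forall>\<tau> \<in> {s<..tst+\<epsilon>}. g (X \<tau> y s) \<noteq> 0))
           \<and> (\<forall>y \<in> cball xst \<epsilon> \<inter> Sset U g. \<forall>t s.
                 t \<in> {tst..tst+\<epsilon>} \<and> s \<in> {tst..tst+\<epsilon>} \<and> t > s \<longrightarrow>
                 0 < t - s \<longrightarrow> t - s < tst + \<epsilon> - s \<longrightarrow>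
                 ereal (t - s) * Mplus U g Dg Hg X tst xst \<epsilon> < ereal (\<alpha>\<^sup>2) \<longrightarrow>
                 g (X t y s) > 0)"
proof -
  obtain L where "L \<ge> 0" and close: "\<forall>s\<in>{a<..<b}. \<forall>\<tau>\<in>{a<..<b}. \<forall>y\<in>U.
      s \<le> \<tau> \<longrightarrow> dist (X \<tau> y s) (X \<tau> y \<tau>) \<le> L * (\<tau> - s)"
    using lipschitz_initial_data_imp_dist_le[OF lip] by blast
  have "xst \<in> U" "(tst, xst) \<in> {a<..<b} \<times> (Uplus U g \<union> Sset U g)"
    using pt by (auto simp: Sset_def)
  moreover have "Dg xst \<bullet> fp tst xst > 0"
    using transv pt alpha by (smt (verit) zero_less_power2)
  ultimately obtain \<delta> where near: "\<forall>t z. (t, z) \<in> {a<..<b} \<times> (Uplus U g \<union> Sset U g)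
      \<longrightarrow> dist t tst < \<delta> \<longrightarrow> dist z xst < \<delta> \<longrightarrow> Dg z \<bullet> fp t z > 0" and "\<delta> > 0"
    using inner_pos_near_point[OF fp_C1 _ has_derivative_continuous[OF g_hess]] by blast
  define \<epsilon> where "\<epsilon> = min ((b - tst) / 2) (\<delta> / (2 * (L + 1)))"
  have "\<epsilon> > 0"
    using pt \<open>\<delta> > 0\<close> \<open>L \<ge> 0\<close> by (auto simp: \<epsilon>_def)
  have "\<epsilon> \<le> (b - tst) / 2" "\<epsilon> \<le> \<delta> / (2 * (L + 1))"
    unfolding \<epsilon>_def by (rule min.cobounded1, rule min.cobounded2)
  then have "tst + \<epsilon> < b" "(L + 1) * \<epsilon> < \<delta>"
    using pt \<open>L \<ge> 0\<close> \<open>\<delta> > 0\<close> by (simp_all add: field_simps)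
  then have positive: "\<forall>\<tau>\<in>{s<..tst+\<epsilon>}. g (X \<tau> y s) > 0"
    if "y \<in> cball xst \<epsilon> \<inter> Sset U g" "s \<in> {tst..tst+\<epsilon>}" for y s
    using pws_flow_positive_near_transversal_point[OF sol g_grad close near \<open>L \<ge> 0\<close> _ _ _ that] pt
    by simp
  show ?thesis
  proof (intro exI[of _ \<epsilon>] conjI ballI allI impI)
    show "\<epsilon> > 0" "{tst..tst + \<epsilon>} \<subseteq> {a<..<b}"
      using \<open>\<epsilon> > 0\<close> \<open>tst + \<epsilon> < b\<close> pt by auto
  next
    fix y t s \<tau>
    assume "y \<in> cball xst \<epsilon> \<inter> Sset U g" "t \<in> {tst..tst + \<epsilon>} \<and> s \<in> {tst..tst + \<epsilon>} \<and> s < t"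
      and "\<tau> \<in> {s<..tst + \<epsilon>}"
    with positive show "g (X \<tau> y s) \<noteq> 0"
      by (metis less_irrefl)
  next
    fix y t s
    assume "y \<in> cball xst \<epsilon> \<inter> Sset U g" "t \<in> {tst..tst + \<epsilon>} \<and> s \<in> {tst..tst + \<epsilon>} \<and> s < t"
    with positive show "g (X t y s) > 0"
      by simp
  qed
qed

end
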